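(* Let $n,d,c\in\mathbb{N}$ with $d\ge 50$ and $c\in[d]$, let $\mathcal{F}\subseteq 2^{[n]}$ be a hereditary family with $\delta(\mathcal{F})\ge 2^{d-1}-c+1$, and let $P$ be an isolated pile of $\mathcal{F}$ with $\sum_{x\in P}\omega_{\mathcal{F}}(x)<2^d-c$. Then the number $u$ of good vertices in $P$ satisfies $u\le 7$.
   Context: A family is hereditary if it is closed under taking subsets. $d_{\mathcal{F}}(x)=|\{F\in\mathcal{F}:x\in F\}|$, $\delta(\mathcal{F})=\min_x d_{\mathcal{F}}(x)$, $N(x)=\bigcup_{x\in F\in\mathcal{F}}F$. The weight of $x$ is $\omega_{\mathcal{F}}(x)=\sum_{x\in F\in\mathcal{F}}\frac{1}{|F|}$. A vertex $x$ is good if $|N(x)|\ge d+1$ and bad if $|N(x)|=d$. A set $P\subseteq[n]$ with $|P|=d$ is a pile of $\mathcal{F}$ if $P\subseteq N(y)$ for every $y\in P$, and there exists $z\in P$ with $N(z)=P$; a pile is isolated if it is disjoint from every other pile. *)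

theory Defs
  imports Main "HOL.Real"
begin

definition family_on :: "nat \<Rightarrow> nat set set \<Rightarrow> bool" where
  "family_on n F \<longleftrightarrow> F \<subseteq> Pow {1..n}"

definition hereditary :: "nat set set \<Rightarrow> bool" where
  "hereditary F \<longleftrightarrow> (\<forall>A B. A \<in> F \<longrightarrow> B \<subseteq> A \<longrightarrow> B \<in> F)"

definition deg :: "nat set set \<Rightarrow> nat \<Rightarrow> nat" where
  "deg F x = card {A \<in> F. x \<in> A}"

definition min_deg :: "nat \<Rightarrow> nat set set \<Rightarrow> nat" where
  "min_deg n F = Min ((deg F) ` {1..n})"

definition nbhd :: "nat set set \<Rightarrow> nat \<Rightarrow> nat set" where
  "nbhd F x = \<Union> {A \<in> F. x \<in> A}"

definition weight :: "nat set set \<Rightarrow> nat \<Rightarrow> real" where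
  "weight F x = (\<Sum>A \<in> {A \<in> F. x \<in> A}. 1 / real (card A))"

definition good :: "nat \<Rightarrow> nat set set \<Rightarrow> nat \<Rightarrow> bool" where
  "good d F x \<longleftrightarrow> card (nbhd F x) \<ge> d + 1"

definition bad :: "nat \<Rightarrow> nat set set \<Rightarrow> nat \<Rightarrow> bool" where
  "bad d F x \<longleftrightarrow> card (nbhd F x) = d"

definition is_pile :: "nat \<Rightarrow> nat \<Rightarrow> nat set set \<Rightarrow> nat set \<Rightarrow> bool" where
  "is_pile n d F P \<longleftrightarrow> P \<subseteq> {1..n} \<and> card P = d \<and>
     (\<forall>y \<in> P. P \<subseteq> nbhd F y) \<and> (\<exists>z \<in> P. nbhd F z = P)"

definition isolated_pile :: "nat \<Rightarrow> nat \<Rightarrow> nat set set \<Rightarrow> nat set \<Rightarrow> bool" where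
  "isolated_pile n d F P \<longleftrightarrow> is_pile n d F P \<and>
     (\<forall>Q. is_pile n d F Q \<and> Q \<noteq> P \<longrightarrow> P \<inter> Q = {})"

end

theory Submission
  imports Defs "HOL-Library.Discrete_Functions"
begin

text \<open>
Let \<open>M\<close> be the family of subsets of the pile \<open>P\<close> that are missing from \<open>F\<close>; it is closed upwards
within \<open>P\<close>. Splitting each weight into the part coming from subsets of \<open>P\<close> and the part coming from
sets leaving \<open>P\<close>, the weight hypothesis says that the total outside weight is less than
\<open>k = |M| + 1 - c\<close>, while the degree bound says that each \<open>x \<in> P\<close> lies in at least
\<open>k - |{S \<in> M. x \<notin> S}|\<close> sets leaving \<open>P\<close>. A good vertex lies in some set leaving \<open>P\<close>, and then
already in a pair of outside weight \<open>1/2\<close>, so there are fewer than \<open>2k\<close> good vertices.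

It remains to show \<open>k \<le> 4\<close>. Otherwise let \<open>2^j \<le> k < 2^(j+1)\<close>, and call \<open>y\<close> a partner of \<open>x\<close> if
\<open>P - {x, y} \<in> M\<close>. A vertex with fewer than \<open>j\<close> partners is avoided by at most \<open>2^(j-1) \<le> k/2\<close> sets
of \<open>M\<close>, so it lies in at least \<open>k/2\<close> sets leaving \<open>P\<close>, whose weight is at least \<open>k/(2(j+3))\<close>;
hence there are fewer than \<open>2j + 6\<close> such vertices. Counting the members of \<open>M\<close> of co-size
one and two then yields \<open>dj + 4 \<le> 2k + (j+2)(2j+5)\<close>, which contradicts \<open>d \<ge> 50\<close> and \<open>k < d\<close>
(the latter because the vertex \<open>z\<close> with \<open>N(z) = P\<close> lies in no set leaving \<open>P\<close>).
\<close>

section \<open>Upward closed families of subsets\<close>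

definition up_closed_in :: "'a set \<Rightarrow> 'a set set \<Rightarrow> bool" where
  "up_closed_in P M \<longleftrightarrow> M \<subseteq> Pow P \<and> (\<forall>S T. S \<in> M \<longrightarrow> S \<subseteq> T \<longrightarrow> T \<subseteq> P \<longrightarrow> T \<in> M)"

definition layer :: "'a set \<Rightarrow> 'a set set \<Rightarrow> nat \<Rightarrow> 'a set set" where
  "layer P M i = {S \<in> M. card (P - S) = i}"

definition partners :: "'a set \<Rightarrow> 'a set set \<Rightarrow> 'a \<Rightarrow> 'a set" where
  "partners P M x = {y \<in> P. y \<noteq> x \<and> P - {x, y} \<in> M}"

lemma up_closed_in_missing:
  assumes "hereditary F"
  shows "up_closed_in P (Pow P - F)"
  using assms unfolding up_closed_in_def hereditary_def by blast

context
  fixes P :: "'a set" and M :: "'a set set"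
  assumes finite_P: "finite P" and up_closed: "up_closed_in P M"
begin

private lemma M_subset_Pow: "M \<subseteq> Pow P"
  using up_closed unfolding up_closed_in_def by blast

private lemma M_upward: "S \<in> M \<Longrightarrow> S \<subseteq> T \<Longrightarrow> T \<subseteq> P \<Longrightarrow> T \<in> M"
  using up_closed unfolding up_closed_in_def by blast

private lemma finite_M: "finite M"
  using M_subset_Pow finite_P by (meson finite_Pow_iff finite_subset)

lemma card_avoiding_le_pow_partners:
  assumes "x \<in> P"
  shows "card {S \<in> M. x \<notin> S} \<le> 2 ^ card (partners P M x)"
proof -
  have "inj_on (\<lambda>S. P - {x} - S) {S \<in> M. x \<notin> S}"
    using M_subset_Pow by (auto simp: inj_on_def)
  moreover have "(\<lambda>S. P - {x} - S) ` {S \<in> M. x \<notin> S} \<subseteq> Pow (partners P M x)"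
  proof (intro image_subsetI PowI subsetI)
    fix S y assume S: "S \<in> {S \<in> M. x \<notin> S}" and y: "y \<in> P - {x} - S"
    have "S \<in> M" "S \<subseteq> P - {x, y}"
      using S y M_subset_Pow by auto
    hence "P - {x, y} \<in> M"
      by (rule M_upward) blast
    thus "y \<in> partners P M x" using y unfolding partners_def by blast
  qed
  ultimately have "card {S \<in> M. x \<notin> S} \<le> card (Pow (partners P M x))"
    using finite_P by (intro card_inj_on_le) (auto simp: partners_def)
  also have "\<dots> = 2 ^ card (partners P M x)"
    using finite_P by (simp add: card_Pow partners_def)
  finally show ?thesis .
qed

lemma sum_card_partners_le: "(\<Sum>x\<in>P. card (partners P M x)) \<le> 2 * card (layer P M 2)"
proof -
  let ?L = "layer P M 2"
  have finite_L: "finite ?L"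
    using finite_M unfolding layer_def by simp
  have "card (partners P M x) \<le> card {S \<in> ?L. x \<notin> S}" if "x \<in> P" for x
  proof (rule card_inj_on_le)
    show "inj_on (\<lambda>y. P - {x, y}) (partners P M x)"
      unfolding partners_def by (auto simp: inj_on_def)
    show "(\<lambda>y. P - {x, y}) ` partners P M x \<subseteq> {S \<in> ?L. x \<notin> S}"
    proof (rule image_subsetI)
      fix y assume "y \<in> partners P M x"
      moreover have "P - (P - {x, y}) = {x, y}"
        using \<open>x \<in> P\<close> \<open>y \<in> partners P M x\<close> unfolding partners_def by auto
      ultimately show "P - {x, y} \<in> {S \<in> ?L. x \<notin> S}"
        unfolding partners_def layer_def by auto
    qed
  qed (use finite_L in auto)
  hence "(\<Sum>x\<in>P. card (partners P M x)) \<le> (\<Sum>x\<in>P. \<Sum>S\<in>{S \<in> ?L. x \<notin> S}. 1)"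
    by (intro sum_mono) simp
  also have "\<dots> = (\<Sum>S\<in>?L. \<Sum>x\<in>{x \<in> P. x \<notin> S}. 1)"
    using finite_P finite_L by (rule sum.swap_restrict)
  also have "\<dots> = (\<Sum>S\<in>?L. 2)"
    by (intro sum.cong) (auto simp: layer_def set_diff_eq)
  finally show ?thesis by simp
qed

lemma card_many_partners_mult_le:
  "card {x \<in> P. j \<le> card (partners P M x)} * j \<le> 2 * card (layer P M 2)"
proof -
  let ?many = "{x \<in> P. j \<le> card (partners P M x)}"
  have "card ?many * j \<le> (\<Sum>x\<in>?many. card (partners P M x))"
    using sum_bounded_below[of ?many j "\<lambda>x. card (partners P M x)"] by (simp add: mult.commute)
  also have "\<dots> \<le> (\<Sum>x\<in>P. card (partners P M x))"
    using finite_P by (intro sum_mono2) auto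
  also have "\<dots> \<le> 2 * card (layer P M 2)"
    by (rule sum_card_partners_le)
  finally show ?thesis .
qed

lemma card_layers_le:
  assumes "M \<noteq> {}"
  shows "1 + card (layer P M 1) + card (layer P M 2) \<le> card M"
proof -
  have "P \<in> M"
    using assms M_subset_Pow M_upward by blast
  hence "{P} \<union> layer P M 1 \<union> layer P M 2 \<subseteq> M"
    unfolding layer_def by auto
  hence "card ({P} \<union> layer P M 1 \<union> layer P M 2) \<le> card M"
    using finite_M by (rule card_mono[rotated])
  moreover have "card ({P} \<union> layer P M 1 \<union> layer P M 2) = 1 + card (layer P M 1) + card (layer P M 2)"
    using finite_M unfolding layer_def by (subst card_Un_disjoint; auto)+
  ultimately show ?thesis by simp
qed

lemma card_le_layer_1_plus_card_few_partners:
  assumes "0 < j"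
  shows "card P \<le> card (layer P M 1) + card {x \<in> P. card (partners P M x) < j}"
proof -
  let ?avoided = "{x \<in> P. \<exists>S\<in>M. x \<notin> S}"
  have "card ?avoided \<le> card (layer P M 1)"
  proof (rule card_inj_on_le)
    show "inj_on (\<lambda>x. P - {x}) ?avoided"
      unfolding inj_on_def by blast
    show "(\<lambda>x. P - {x}) ` ?avoided \<subseteq> layer P M 1"
    proof clarify
      fix x S assume "x \<in> P" "S \<in> M" "x \<notin> S"
      moreover from this M_subset_Pow have "S \<subseteq> P - {x}"
        by auto
      ultimately have "P - {x} \<in> M"
        using M_upward by blast
      with \<open>x \<in> P\<close> show "P - {x} \<in> layer P M 1"
        unfolding layer_def by (simp add: Diff_Diff_Int Int_absorb1)
    qed
    show "finite (layer P M 1)" using finite_M unfolding layer_def by simp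
  qed
  moreover have "partners P M x = {}" if "x \<in> P - ?avoided" for x
  proof -
    have "x \<in> S" if "S \<in> M" for S
      using \<open>x \<in> P - ?avoided\<close> that by blast
    thus ?thesis
      unfolding partners_def by auto
  qed
  hence "P - ?avoided \<subseteq> {x \<in> P. card (partners P M x) < j}"
    using assms by auto
  hence "card (P - ?avoided) \<le> card {x \<in> P. card (partners P M x) < j}"
    using finite_P by (intro card_mono) auto
  moreover have "?avoided \<union> (P - ?avoided) = P" by blast
  hence "card P \<le> card ?avoided + card (P - ?avoided)"
    using card_Un_le[of ?avoided "P - ?avoided"] by simp
  ultimately show ?thesis by linarith
qed

end

section \<open>Weight of the sets leaving a set\<close>

lemma card_div_le_sum_inverse_card:
  assumes "finite \<A>" and "\<G> \<subseteq> \<A>" and "\<And>A. A \<in> \<A> \<Longrightarrow> 0 < card A"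
    and "\<And>A. A \<in> \<G> \<Longrightarrow> card A \<le> t"
  shows "real (card \<G>) / real t \<le> (\<Sum>A\<in>\<A>. 1 / real (card A))"
proof -
  have "real (card \<G>) / real t = (\<Sum>A\<in>\<G>. 1 / real t)" by simp
  also have "\<dots> \<le> (\<Sum>A\<in>\<G>. 1 / real (card A))"
    using assms by (intro sum_mono frac_le) auto
  also have "\<dots> \<le> (\<Sum>A\<in>\<A>. 1 / real (card A))"
    using assms by (intro sum_mono2) auto
  finally show ?thesis .
qed

definition outside :: "nat set set \<Rightarrow> nat set \<Rightarrow> nat \<Rightarrow> nat set set" where
  "outside F P x = {A \<in> F. x \<in> A \<and> \<not> A \<subseteq> P}"

definition outside_weight :: "nat set set \<Rightarrow> nat set \<Rightarrow> nat \<Rightarrow> real" where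
  "outside_weight F P x = (\<Sum>A\<in>outside F P x. 1 / real (card A))"

context
  fixes F :: "nat set set"
  assumes finite_F: "finite F" and finite_members: "\<And>A. A \<in> F \<Longrightarrow> finite A"
    and hereditary_F: "hereditary F"
begin

private lemma subset_mem: "A \<in> F \<Longrightarrow> B \<subseteq> A \<Longrightarrow> B \<in> F"
  using hereditary_F unfolding hereditary_def by blast

private lemma finite_outside: "finite (outside F P x)"
  using finite_F unfolding outside_def by simp

private lemma card_outside_pos: "A \<in> outside F P x \<Longrightarrow> 0 < card A"
  using finite_members unfolding outside_def by (auto simp: card_gt_0_iff)

private lemma outside_leaving_point:
  assumes "A \<in> outside F P x" and "x \<in> P"
  obtains y where "y \<in> A" "y \<notin> P" "x \<noteq> y"
  using assms unfolding outside_def by auto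

lemma outside_weight_ge_half:
  assumes "x \<in> P" and "outside F P x \<noteq> {}"
  shows "1 / 2 \<le> outside_weight F P x"
proof -
  obtain A where A: "A \<in> outside F P x" using assms by blast
  then obtain y where y: "y \<in> A" "y \<notin> P" "x \<noteq> y"
    using assms(1) by (rule outside_leaving_point)
  have "{x, y} \<in> F"
    by (rule subset_mem[of A]) (use A y in \<open>auto simp: outside_def\<close>)
  hence "{{x, y}} \<subseteq> outside F P x"
    using y unfolding outside_def by auto
  hence "real (card {{x, y}}) / real 2 \<le> outside_weight F P x"
    unfolding outside_weight_def using finite_outside card_outside_pos
    by (intro card_div_le_sum_inverse_card) (auto simp: card_insert_if)
  thus ?thesis by simp
qed

text \<open>All sets \<open>{x, y} \<union> C\<close> with \<open>C\<close> inside a \<open>(j+1)\<close>-subset of \<open>A - {x, y}\<close> leave \<open>P\<close>.\<close>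

lemma outside_weight_ge_of_large_set:
  assumes "x \<in> P" and A: "A \<in> outside F P x" and "j + 3 \<le> card A"
  shows "2 ^ (j + 1) / real (j + 3) \<le> outside_weight F P x"
proof -
  obtain y where y: "y \<in> A" "y \<notin> P" "x \<noteq> y"
    using A assms(1) by (rule outside_leaving_point)
  have "finite A" "{x, y} \<subseteq> A"
    using A y finite_members unfolding outside_def by auto
  hence "j + 1 \<le> card (A - {x, y})"
    using \<open>j + 3 \<le> card A\<close> y by (simp add: card_Diff_subset)
  then obtain B where B: "B \<subseteq> A - {x, y}" "card B = j + 1"
    by (rule obtain_subset_with_card_n)
  have "finite B" using B \<open>finite A\<close> finite_subset by blast
  let ?G = "(\<lambda>C. C \<union> {x, y}) ` Pow B"
  have "inj_on (\<lambda>C. C \<union> {x, y}) (Pow B)"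
  proof (rule inj_onI)
    fix C D assume "C \<in> Pow B" "D \<in> Pow B" "C \<union> {x, y} = D \<union> {x, y}"
    moreover have "C = C \<union> {x, y} - {x, y}" "D = D \<union> {x, y} - {x, y}"
      using B \<open>C \<in> Pow B\<close> \<open>D \<in> Pow B\<close> by blast+
    ultimately show "C = D" by simp
  qed
  hence card_G: "card ?G = 2 ^ (j + 1)"
    using B \<open>finite B\<close> by (simp add: card_image card_Pow)
  have "?G \<subseteq> outside F P x"
  proof (rule image_subsetI)
    fix C assume "C \<in> Pow B"
    have "C \<union> {x, y} \<in> F"
      by (rule subset_mem[of A]) (use A B y \<open>C \<in> Pow B\<close> in \<open>auto simp: outside_def\<close>)
    thus "C \<union> {x, y} \<in> outside F P x"
      using y unfolding outside_def by auto
  qed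
  moreover have "card D \<le> j + 3" if "D \<in> ?G" for D
  proof -
    obtain C where "C \<subseteq> B" "D = C \<union> {x, y}" using \<open>D \<in> ?G\<close> by blast
    moreover from this have "card C \<le> j + 1"
      using B \<open>finite B\<close> by (metis card_mono)
    ultimately show ?thesis
      using card_Un_le[of C "{x, y}"] \<open>x \<noteq> y\<close> by simp
  qed
  ultimately have "real (card ?G) / real (j + 3) \<le> outside_weight F P x"
    unfolding outside_weight_def using finite_outside card_outside_pos
    by (intro card_div_le_sum_inverse_card) auto
  thus ?thesis using card_G by simp
qed

text \<open>Either all sets leaving \<open>P\<close> through \<open>x\<close> are small, or one of them has many subsets leaving \<open>P\<close>.\<close>

lemma outside_weight_ge:
  assumes "x \<in> P" and "k \<le> 2 * card (outside F P x)" and "k \<le> 2 ^ (j + 2)"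
  shows "real k / (2 * (real j + 3)) \<le> outside_weight F P x"
proof (cases "\<forall>A\<in>outside F P x. card A \<le> j + 2")
  case True
  have "real k \<le> 2 * real (card (outside F P x))"
    using assms(2) by linarith
  hence "real k / (2 * (real j + 3)) \<le> 2 * real (card (outside F P x)) / (2 * (real j + 3))"
    by (intro divide_right_mono) auto
  also have "\<dots> = real (card (outside F P x)) / (real j + 3)"
    by (rule mult_divide_mult_cancel_left) simp
  also have "\<dots> \<le> real (card (outside F P x)) / real (j + 2)"
    by (intro divide_left_mono) auto
  also have "\<dots> \<le> outside_weight F P x"
    unfolding outside_weight_def using True finite_outside card_outside_pos
    by (intro card_div_le_sum_inverse_card) auto
  finally show ?thesis .
next
  case False
  then obtain A where "A \<in> outside F P x" "j + 3 \<le> card A" by auto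
  have "real k \<le> 2 ^ (j + 2)"
    using assms(3) by (metis of_nat_le_iff of_nat_numeral of_nat_power)
  hence "real k / (2 * (real j + 3)) \<le> 2 ^ (j + 2) / (2 * (real j + 3))"
    by (intro divide_right_mono) auto
  also have "\<dots> = 2 ^ (j + 1) / real (j + 3)"
    by (simp add: field_simps)
  also have "\<dots> \<le> outside_weight F P x"
    by (rule outside_weight_ge_of_large_set) fact+
  finally show ?thesis .
qed

end

lemma card_Pow_mem:
  assumes "finite P" and "x \<in> P"
  shows "card {A \<in> Pow P. x \<in> A} = 2 ^ (card P - 1)"
proof -
  have "bij_betw (\<lambda>A. A - {x}) {A \<in> Pow P. x \<in> A} (Pow (P - {x}))"
    using assms by (intro bij_betw_byWitness[where f'="insert x"]) auto
  hence "card {A \<in> Pow P. x \<in> A} = card (Pow (P - {x}))" by (rule bij_betw_same_card)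
  also have "\<dots> = 2 ^ (card P - 1)" using assms by (simp add: card_Pow)
  finally show ?thesis .
qed

lemma sum_sum_inverse_card_subsets:
  assumes "finite P" and "\<I> \<subseteq> Pow P" and "{} \<in> \<I>"
  shows "(\<Sum>x\<in>P. \<Sum>A\<in>{A \<in> \<I>. x \<in> A}. 1 / real (card A)) = real (card \<I>) - 1"
proof -
  have finite_I: "finite \<I>"
    using assms by (meson finite_Pow_iff finite_subset)
  have "(\<Sum>x\<in>P. \<Sum>A\<in>{A \<in> \<I>. x \<in> A}. 1 / real (card A))
      = (\<Sum>A\<in>\<I>. \<Sum>x\<in>{x \<in> P. x \<in> A}. 1 / real (card A))"
    using assms(1) finite_I by (rule sum.swap_restrict)
  also have "\<dots> = (\<Sum>A\<in>\<I> - {{}}. 1)"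
  proof (rule sum.mono_neutral_cong_right)
    fix A assume "A \<in> \<I> - {{}}"
    moreover from this have "{x \<in> P. x \<in> A} = A" "finite A"
      using assms by (auto intro: finite_subset[of A P])
    ultimately show "(\<Sum>x\<in>{x \<in> P. x \<in> A}. 1 / real (card A)) = 1" by simp
  qed (use finite_I in auto)
  also have "\<dots> = real (card \<I>) - 1"
  proof -
    have "0 < card \<I>"
      using assms(3) finite_I card_gt_0_iff by blast
    thus ?thesis
      using assms(3) finite_I by (simp add: card_Diff_singleton of_nat_diff)
  qed
  finally show ?thesis .
qed

lemma containing_eq_inside_Un_outside:
  "{A \<in> F. x \<in> A} = {A \<in> F. A \<subseteq> P \<and> x \<in> A} \<union> outside F P x"
  "{A \<in> F. A \<subseteq> P \<and> x \<in> A} \<inter> outside F P x = {}"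
  unfolding outside_def by auto

lemma deg_eq_inside_plus_outside:
  assumes "finite F"
  shows "deg F x = card {A \<in> F. A \<subseteq> P \<and> x \<in> A} + card (outside F P x)"
  unfolding deg_def containing_eq_inside_Un_outside(1)[of F x P]
  using assms containing_eq_inside_Un_outside(2) by (intro card_Un_disjoint) (auto simp: outside_def)

lemma weight_eq_inside_plus_outside:
  assumes "finite F"
  shows "weight F x = (\<Sum>A\<in>{A \<in> F. A \<subseteq> P \<and> x \<in> A}. 1 / real (card A)) + outside_weight F P x"
  unfolding weight_def outside_weight_def containing_eq_inside_Un_outside(1)[of F x P]
  using assms containing_eq_inside_Un_outside(2) by (intro sum.union_disjoint) (auto simp: outside_def)

lemma quadratic_lt_pow2_mult:
  fixes j :: nat
  assumes "6 \<le> j"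
  shows "2 * j * j + 8 * j + 6 < 2 ^ j * (j - 2)"
  using assms
proof (induction j rule: dec_induct)
  case base
  show ?case by simp
next
  case (step i)
  have "2 * Suc i * Suc i + 8 * Suc i + 6 = 2 * (i * i) + 12 * i + 16"
    by (simp add: algebra_simps)
  also have "\<dots> \<le> 2 * (2 * i * i + 8 * i + 6)"
    using step.hyps(1) by simp
  also have "\<dots> < 2 * (2 ^ i * (i - 2))"
    using step.IH by simp
  also have "\<dots> \<le> 2 ^ Suc i * (Suc i - 2)"
    using step.hyps by (simp add: Suc_diff_le)
  finally show ?case .
qed

lemma log_quadratic_lt_linear:
  fixes d j k :: nat
  assumes "2 ^ j \<le> k" and "k < 2 ^ Suc j" and "5 \<le> k" and "k < d" and "50 \<le> d"
  shows "2 * k + (j + 2) * (2 * j + 5) < d * j + 4"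
proof -
  have "2 \<le> j"
  proof (rule ccontr)
    assume "\<not> 2 \<le> j"
    hence "(2::nat) ^ Suc j \<le> 2 ^ 2" by (intro power_increasing) auto
    thus False using assms(2,3) by simp
  qed
  show ?thesis
  proof (cases "j \<le> 5")
    case True
    with \<open>2 \<le> j\<close> have "j = 2 \<or> j = 3 \<or> j = 4 \<or> j = 5" by auto
    moreover have "50 * j \<le> d * j" using assms(5) by simp
    ultimately show ?thesis using assms(2) by auto
  next
    case False
    have "(k + 1) * j \<le> d * j" using assms(4) by (intro mult_le_mono1) simp
    moreover have "2 ^ j * (j - 2) \<le> k * (j - 2)" using assms(1) by simp
    moreover have "2 * j * j + 8 * j + 6 < 2 ^ j * (j - 2)"
      using False by (intro quadratic_lt_pow2_mult) simp
    ultimately show ?thesis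
      using \<open>2 \<le> j\<close> by (simp add: algebra_simps diff_mult_distrib2)
  qed
qed

section \<open>Piles with small total weight\<close>

locale pile_setting =
  fixes d c :: nat and F :: "nat set set" and P :: "nat set"
  assumes finite_F: "finite F"
    and finite_members: "\<And>A. A \<in> F \<Longrightarrow> finite A"
    and hereditary_F: "hereditary F"
    and finite_P: "finite P" and card_P: "card P = d"
    and subset_nbhd: "\<And>y. y \<in> P \<Longrightarrow> P \<subseteq> nbhd F y"
    and nbhd_eq: "\<exists>z\<in>P. nbhd F z = P"
    and deg_ge: "\<And>x. x \<in> P \<Longrightarrow> 2 ^ (d - 1) - c + 1 \<le> deg F x"
    and c_le_d: "c \<le> d"
    and sum_weight_lt: "(\<Sum>x\<in>P. weight F x) < 2 ^ d - real c"
begin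

definition missing :: "nat set set" where
  "missing = Pow P - F"

definition excess :: nat where
  "excess = card missing + 1 - c"

lemma up_closed_missing: "up_closed_in P missing"
  unfolding missing_def using hereditary_F by (rule up_closed_in_missing)

lemma finite_missing: "finite missing"
  using finite_P unfolding missing_def by simp

lemma outside_weight_nonneg: "0 \<le> outside_weight F P x"
  unfolding outside_weight_def by (simp add: sum_nonneg)

lemma sum_outside_weight_le: "Q \<subseteq> P \<Longrightarrow> (\<Sum>x\<in>Q. outside_weight F P x) \<le> (\<Sum>x\<in>P. outside_weight F P x)"
  using finite_P outside_weight_nonneg by (intro sum_mono2) auto

lemma empty_mem_F: "{} \<in> F"
proof -
  obtain z where "z \<in> P" "nbhd F z = P" using nbhd_eq by blast
  then obtain A where "A \<in> F" unfolding nbhd_def by auto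
  thus ?thesis using hereditary_F unfolding hereditary_def by blast
qed

lemma card_inside: "card {A \<in> F. A \<subseteq> P} + card missing = 2 ^ d"
proof -
  have "Pow P = {A \<in> F. A \<subseteq> P} \<union> missing" "{A \<in> F. A \<subseteq> P} \<inter> missing = {}"
    unfolding missing_def by auto
  thus ?thesis
    using finite_P card_P by (metis card_Pow card_Un_disjoint finite_Pow_iff finite_Un)
qed

lemma sum_outside_weight_lt: "(\<Sum>x\<in>P. outside_weight F P x) < real (card missing) + 1 - real c"
proof -
  have "(\<Sum>x\<in>P. weight F x)
      = (\<Sum>x\<in>P. \<Sum>A\<in>{A \<in> {A \<in> F. A \<subseteq> P}. x \<in> A}. 1 / real (card A))
        + (\<Sum>x\<in>P. outside_weight F P x)"
    unfolding weight_eq_inside_plus_outside[OF finite_F, of _ P] by (simp add: sum.distrib)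
  also have "\<dots> = real (card {A \<in> F. A \<subseteq> P}) - 1 + (\<Sum>x\<in>P. outside_weight F P x)"
    using finite_P empty_mem_F by (subst sum_sum_inverse_card_subsets) auto
  also have "real (card {A \<in> F. A \<subseteq> P}) = 2 ^ d - real (card missing)"
    using card_inside by (metis add_diff_cancel_right' of_nat_add of_nat_numeral of_nat_power)
  finally show ?thesis
    using sum_weight_lt by linarith
qed

lemma c_le_card_missing: "c \<le> card missing"
proof -
  have "0 \<le> (\<Sum>x\<in>P. outside_weight F P x)"
    by (intro sum_nonneg outside_weight_nonneg)
  hence "real c < real (card missing + 1)"
    using sum_outside_weight_lt by simp
  thus ?thesis by simp
qed

lemma sum_outside_weight_lt_excess: "(\<Sum>x\<in>P. outside_weight F P x) < real excess"
  using sum_outside_weight_lt c_le_card_missing unfolding excess_def by (simp add: of_nat_diff)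

lemma card_missing_containing_lt:
  assumes "x \<in> P"
  shows "card {S \<in> missing. x \<in> S} < c + card (outside F P x)"
proof -
  have "{A \<in> Pow P. x \<in> A} = {A \<in> F. A \<subseteq> P \<and> x \<in> A} \<union> {S \<in> missing. x \<in> S}"
    "{A \<in> F. A \<subseteq> P \<and> x \<in> A} \<inter> {S \<in> missing. x \<in> S} = {}"
    unfolding missing_def by auto
  hence "card {A \<in> Pow P. x \<in> A} = card {A \<in> F. A \<subseteq> P \<and> x \<in> A} + card {S \<in> missing. x \<in> S}"
    using finite_F finite_missing by (simp add: card_Un_disjoint)
  hence "card {A \<in> F. A \<subseteq> P \<and> x \<in> A} + card {S \<in> missing. x \<in> S} = 2 ^ (d - 1)"
    using card_Pow_mem[OF finite_P assms] card_P by simp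
  moreover have "2 ^ (d - 1) - c + 1 \<le> card {A \<in> F. A \<subseteq> P \<and> x \<in> A} + card (outside F P x)"
    using deg_ge[OF assms] deg_eq_inside_plus_outside[OF finite_F] by simp
  moreover have "c \<le> 2 ^ (d - 1)"
    using less_exp[of "d - 1"] c_le_d by linarith
  ultimately show ?thesis by linarith
qed

lemma excess_le_avoiding_plus_outside:
  assumes "x \<in> P"
  shows "excess \<le> card {S \<in> missing. x \<notin> S} + card (outside F P x)"
proof -
  have "{S \<in> missing. x \<in> S} \<union> {S \<in> missing. x \<notin> S} = missing" by blast
  hence "card missing \<le> card {S \<in> missing. x \<in> S} + card {S \<in> missing. x \<notin> S}"
    using card_Un_le[of "{S \<in> missing. x \<in> S}" "{S \<in> missing. x \<notin> S}"] by simp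
  thus ?thesis
    using card_missing_containing_lt[OF assms] unfolding excess_def by linarith
qed

lemma excess_lt_card: "excess < d"
proof -
  obtain z where z: "z \<in> P" "nbhd F z = P" using nbhd_eq by blast
  have "outside F P z = {}"
    using z unfolding outside_def nbhd_def by blast
  moreover have "card {S \<in> missing. z \<notin> S} \<le> card {S \<in> missing. z \<in> S}"
  proof (rule card_inj_on_le)
    show "inj_on (insert z) {S \<in> missing. z \<notin> S}"
      by (rule inj_onI) (simp add: insert_ident)
    show "insert z ` {S \<in> missing. z \<notin> S} \<subseteq> {S \<in> missing. z \<in> S}"
      using z(1) up_closed_missing unfolding up_closed_in_def by blast
  qed (use finite_missing in simp)
  ultimately show ?thesis
    using excess_le_avoiding_plus_outside[OF z(1)] card_missing_containing_lt[OF z(1)] c_le_d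
    by simp
qed

lemma outside_nonempty_if_good:
  assumes "x \<in> P" and "good d F x"
  shows "outside F P x \<noteq> {}"
proof
  assume "outside F P x = {}"
  hence "nbhd F x \<subseteq> P"
    unfolding outside_def nbhd_def by blast
  hence "nbhd F x = P"
    using subset_nbhd[OF assms(1)] by blast
  thus False
    using assms(2) card_P unfolding good_def by simp
qed

lemma card_good_lt: "card {x \<in> P. good d F x} < 2 * excess"
proof -
  let ?G = "{x \<in> P. good d F x}"
  have "real (card ?G) * (1 / 2) \<le> (\<Sum>x\<in>?G. outside_weight F P x)"
    using outside_weight_ge_half[OF finite_F finite_members hereditary_F] outside_nonempty_if_good
    by (intro sum_bounded_below) auto
  also have "\<dots> < real excess"
    using sum_outside_weight_le[of ?G] sum_outside_weight_lt_excess by auto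
  finally show ?thesis by linarith
qed

lemma card_few_partners_le:
  assumes "0 < j" and "2 ^ j \<le> excess" and "excess < 2 ^ Suc j"
  shows "card {x \<in> P. card (partners P missing x) < j} \<le> 2 * j + 5"
proof -
  let ?poor = "{x \<in> P. card (partners P missing x) < j}"
  have "real excess / (2 * (real j + 3)) \<le> outside_weight F P x" if "x \<in> ?poor" for x
  proof (rule outside_weight_ge[OF finite_F finite_members hereditary_F])
    show "x \<in> P" using that by simp
    have "card {S \<in> missing. x \<notin> S} \<le> 2 ^ card (partners P missing x)"
      using finite_P up_closed_missing \<open>x \<in> P\<close> by (rule card_avoiding_le_pow_partners)
    also have "\<dots> \<le> 2 ^ (j - 1)"
      using that by (intro power_increasing) auto
    moreover have "2 * 2 ^ (j - 1) = (2::nat) ^ j"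
      using assms(1) by (metis Suc_diff_1 power_Suc)
    ultimately have "2 * card {S \<in> missing. x \<notin> S} \<le> 2 ^ j"
      by linarith
    thus "excess \<le> 2 * card (outside F P x)"
      using excess_le_avoiding_plus_outside[OF \<open>x \<in> P\<close>] assms(2) by linarith
    show "excess \<le> 2 ^ (j + 2)"
      using assms(3) power_increasing[of "Suc j" "j + 2" "2::nat"] by simp
  qed
  hence "real (card ?poor) * (real excess / (2 * (real j + 3))) \<le> (\<Sum>x\<in>?poor. outside_weight F P x)"
    by (rule sum_bounded_below)
  also have "\<dots> < real excess"
    using sum_outside_weight_le[of ?poor] sum_outside_weight_lt_excess by auto
  finally have "real excess * real (card ?poor) < real excess * (2 * (real j + 3))"
    by (simp add: field_simps)
  moreover have "(0::nat) < 2 ^ j" by simp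
  hence "0 < real excess"
    using assms(2) by linarith
  ultimately have "real (card ?poor) < real (2 * j + 6)"
    by simp
  hence "card ?poor < 2 * j + 6"
    by (simp only: of_nat_less_iff)
  thus ?thesis by simp
qed

lemma card_mult_log_le:
  assumes "0 < j" and "2 ^ j \<le> excess" and "excess < 2 ^ Suc j" and "5 \<le> excess"
  shows "d * j + 4 \<le> 2 * excess + (j + 2) * (2 * j + 5)"
proof -
  let ?many = "{x \<in> P. j \<le> card (partners P missing x)}"
  let ?few = "{x \<in> P. card (partners P missing x) < j}"
  let ?L1 = "layer P missing 1" and ?L2 = "layer P missing 2"
  have "P = ?many \<union> ?few" "?many \<inter> ?few = {}" by auto
  hence partition: "card ?many + card ?few = d"
    using finite_P card_P by (metis card_Un_disjoint finite_Un)
  have many: "card ?many * j \<le> 2 * card ?L2"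
    using finite_P up_closed_missing by (rule card_many_partners_mult_le)
  have few: "card ?few \<le> 2 * j + 5"
    using assms(1-3) by (rule card_few_partners_le)
  have "d \<le> card ?L1 + card ?few"
    using card_le_layer_1_plus_card_few_partners[OF finite_P up_closed_missing assms(1)] card_P
    by simp
  moreover have "1 + card ?L1 + card ?L2 \<le> card missing"
    using assms(4) unfolding excess_def
    by (intro card_layers_le[OF finite_P up_closed_missing]) auto
  moreover have "card missing + 1 \<le> d + excess"
    using c_le_d unfolding excess_def by linarith
  ultimately have "card ?many * j + 4 \<le> 2 * excess + 2 * card ?few"
    using many by linarith
  moreover have "d * j = card ?many * j + card ?few * j"
    using partition by (metis add_mult_distrib)
  moreover have "(j + 2) * card ?few \<le> (j + 2) * (2 * j + 5)"
    using few by (rule mult_le_mono2)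
  ultimately show ?thesis
    by (simp add: algebra_simps)
qed

lemma excess_le_4:
  assumes "50 \<le> d"
  shows "excess \<le> 4"
proof (rule ccontr)
  assume "\<not> excess \<le> 4"
  define j where "j = floor_log excess"
  have j: "2 ^ j \<le> excess" "excess < 2 ^ Suc j"
    unfolding j_def using \<open>\<not> excess \<le> 4\<close> floor_log_exp2_le floor_log_exp2_gt by auto
  have "0 < j"
    using j(2) \<open>\<not> excess \<le> 4\<close> by (cases j) auto
  hence "d * j + 4 \<le> 2 * excess + (j + 2) * (2 * j + 5)"
    using j \<open>\<not> excess \<le> 4\<close> by (intro card_mult_log_le) auto
  moreover have "2 * excess + (j + 2) * (2 * j + 5) < d * j + 4"
    using j \<open>\<not> excess \<le> 4\<close> excess_lt_card assms by (intro log_quadratic_lt_linear) auto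
  ultimately show False by linarith
qed

end

theorem mainTheorem19:
  fixes n d c :: nat and F :: "nat set set" and P :: "nat set"
  assumes "d \<ge> 50" and "1 \<le> c" and "c \<le> d"
    and "family_on n F" and "hereditary F"
    and "min_deg n F \<ge> 2 ^ (d - 1) - c + 1"
    and "isolated_pile n d F P"
    and "(\<Sum>x\<in>P. weight F x) < 2 ^ d - real c"
  shows "card {x \<in> P. good d F x} \<le> 7"
proof -
  have pile: "is_pile n d F P"
    using assms(7) unfolding isolated_pile_def by blast
  have F_sub: "F \<subseteq> Pow {1..n}" and P_sub: "P \<subseteq> {1..n}"
    using assms(4) pile unfolding family_on_def is_pile_def by auto
  interpret pile_setting d c F P
  proof
    show "finite F" using F_sub by (rule finite_subset) simp
    show "finite A" if "A \<in> F" for A using F_sub that finite_subset by blast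
    show "finite P" using P_sub by (rule finite_subset) simp
    show "2 ^ (d - 1) - c + 1 \<le> deg F x" if "x \<in> P" for x
    proof -
      have "min_deg n F \<le> deg F x"
        unfolding min_deg_def using that P_sub by (intro Min_le) auto
      thus ?thesis using assms(6) by linarith
    qed
  qed (use assms pile in \<open>auto simp: is_pile_def\<close>)
  have "card {x \<in> P. good d F x} < 2 * excess" by (rule card_good_lt)
  moreover have "excess \<le> 4" using assms(1) by (rule excess_le_4)
  ultimately show ?thesis by linarith
qed

end
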